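(* Let $k$ be a field, $\mathsf{E}$ a left strictly locally finite $k$-linear category, and suppose a standard frontier $X_y$ has been chosen for every object $y$. Then for every object $y\in\mathsf{E}$ and every integer $n\ge1$, the degree $n$ standard frontier $X_y^{(n)}$ is a frontier for $y$.
   Context: A small $k$-linear category $\mathsf{E}$ has $k$-vector spaces $\operatorname{Hom}_\mathsf{E}(x,y)$, $k$-bilinear associative composition and identities with $\mathrm{id}_x\ne0$. Write $x\preceq y$ if there are $n\ge1$ and objects $x=z_0,\dots,z_n=y$ with $\operatorname{Hom}_\mathsf{E}(z_{i-1},z_i)\neq0$ for all $i$; $x\prec y$ means $x\preceq y$ and not $y\preceq x$. $\mathsf{E}$ is locally finite if all Hom spaces are finite-dimensional and every $\{z:x\preceq z\preceq y\}$ is finite. A finite set of objects $X$ with $x\prec y$ for all $x\in X$ is a frontier for $y$ if there is a finite set of objects $W$ such that every morphism $f:z\to y$ with $z\prec y$ and $z\notin W$ can be written $f=\sum_{i=1}^nh_ig_i$ ($n\ge0$) with $g_i:z\to x_i$, $h_i:x_i\to y$, $x_i\in X$. $\mathsf{E}$ is left strictly locally finite if it is locally finite and every object $y$ has a frontier with $W=\emptyset$; a chosen such frontier $X_y$ (for each $y$) is called the standard frontier of $y$. Define $X_y^{(1)}=X_y$ and $X_y^{(n+1)}=\bigcup_{z\in X_y^{(n)}}X_z$. *)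

theory Defs
  imports Main
begin

text \<open>A small k-linear category, presented concretely: a set of objects, for each
pair of objects a set of morphisms (elements of an ambient type 'm), and the
k-vector-space operations and composition on these Hom sets.
  cmp x y z h g  is the composite  h \<circ> g  of  g : x \<rightarrow> y  and  h : y \<rightarrow> z.\<close>

record ('o, 'm, 'k) klcat =
  Ob    :: "'o set"
  Hom   :: "'o \<Rightarrow> 'o \<Rightarrow> 'm set"
  cmp   :: "'o \<Rightarrow> 'o \<Rightarrow> 'o \<Rightarrow> 'm \<Rightarrow> 'm \<Rightarrow> 'm"
  madd  :: "'o \<Rightarrow> 'o \<Rightarrow> 'm \<Rightarrow> 'm \<Rightarrow> 'm"
  msmul :: "'o \<Rightarrow> 'o \<Rightarrow> 'k \<Rightarrow> 'm \<Rightarrow> 'm"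
  mzero :: "'o \<Rightarrow> 'o \<Rightarrow> 'm"
  ident :: "'o \<Rightarrow> 'm"

definition klinear_cat :: "('o, 'm, 'k::field) klcat \<Rightarrow> bool" where
  "klinear_cat E \<longleftrightarrow>
    \<comment> \<open>each Hom x y is a k-vector space\<close>
    (\<forall>x\<in>Ob E. \<forall>y\<in>Ob E.
       mzero E x y \<in> Hom E x y \<and>
       (\<forall>f\<in>Hom E x y. \<forall>g\<in>Hom E x y. madd E x y f g \<in> Hom E x y) \<and>
       (\<forall>c. \<forall>f\<in>Hom E x y. msmul E x y c f \<in> Hom E x y) \<and>
       (\<forall>f\<in>Hom E x y. \<forall>g\<in>Hom E x y. \<forall>h\<in>Hom E x y.
          madd E x y (madd E x y f g) h = madd E x y f (madd E x y g h)) \<and>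
       (\<forall>f\<in>Hom E x y. \<forall>g\<in>Hom E x y. madd E x y f g = madd E x y g f) \<and>
       (\<forall>f\<in>Hom E x y. madd E x y (mzero E x y) f = f) \<and>
       (\<forall>f\<in>Hom E x y. \<exists>g\<in>Hom E x y. madd E x y f g = mzero E x y) \<and>
       (\<forall>c. \<forall>f\<in>Hom E x y. \<forall>g\<in>Hom E x y.
          msmul E x y c (madd E x y f g) = madd E x y (msmul E x y c f) (msmul E x y c g)) \<and>
       (\<forall>c d. \<forall>f\<in>Hom E x y.
          msmul E x y (c + d) f = madd E x y (msmul E x y c f) (msmul E x y d f)) \<and>
       (\<forall>c d. \<forall>f\<in>Hom E x y. msmul E x y (c * d) f = msmul E x y c (msmul E x y d f)) \<and>
       (\<forall>f\<in>Hom E x y. msmul E x y 1 f = f)) \<and>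
    \<comment> \<open>identities, nonzero\<close>
    (\<forall>x\<in>Ob E. ident E x \<in> Hom E x x \<and> ident E x \<noteq> mzero E x x) \<and>
    \<comment> \<open>composition: closed, bilinear, associative, unital\<close>
    (\<forall>x\<in>Ob E. \<forall>y\<in>Ob E. \<forall>z\<in>Ob E.
       (\<forall>g\<in>Hom E x y. \<forall>h\<in>Hom E y z. cmp E x y z h g \<in> Hom E x z) \<and>
       (\<forall>g\<in>Hom E x y. \<forall>h\<in>Hom E y z. \<forall>h'\<in>Hom E y z.
          cmp E x y z (madd E y z h h') g = madd E x z (cmp E x y z h g) (cmp E x y z h' g)) \<and>
       (\<forall>g\<in>Hom E x y. \<forall>g'\<in>Hom E x y. \<forall>h\<in>Hom E y z.
          cmp E x y z h (madd E x y g g') = madd E x z (cmp E x y z h g) (cmp E x y z h g')) \<and>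
       (\<forall>c. \<forall>g\<in>Hom E x y. \<forall>h\<in>Hom E y z.
          cmp E x y z (msmul E y z c h) g = msmul E x z c (cmp E x y z h g)) \<and>
       (\<forall>c. \<forall>g\<in>Hom E x y. \<forall>h\<in>Hom E y z.
          cmp E x y z h (msmul E x y c g) = msmul E x z c (cmp E x y z h g))) \<and>
    (\<forall>w\<in>Ob E. \<forall>x\<in>Ob E. \<forall>y\<in>Ob E. \<forall>z\<in>Ob E.
       \<forall>f\<in>Hom E w x. \<forall>g\<in>Hom E x y. \<forall>h\<in>Hom E y z.
         cmp E w y z h (cmp E w x y g f) = cmp E w x z (cmp E x y z h g) f) \<and>
    (\<forall>x\<in>Ob E. \<forall>y\<in>Ob E. \<forall>f\<in>Hom E x y.
       cmp E x y y (ident E y) f = f \<and> cmp E x x y f (ident E x) = f)"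

definition msum :: "('o, 'm, 'k) klcat \<Rightarrow> 'o \<Rightarrow> 'o \<Rightarrow> 'm list \<Rightarrow> 'm" where
  "msum E x y fs = foldr (madd E x y) fs (mzero E x y)"

definition hom_fin_dim :: "('o, 'm, 'k) klcat \<Rightarrow> 'o \<Rightarrow> 'o \<Rightarrow> bool" where
  "hom_fin_dim E x y \<longleftrightarrow> (\<exists>S. finite S \<and> S \<subseteq> Hom E x y \<and>
     (\<forall>f\<in>Hom E x y. \<exists>cs :: ('k \<times> 'm) list. set (map snd cs) \<subseteq> S \<and>
        f = msum E x y (map (\<lambda>(c, s). msmul E x y c s) cs)))"

definition hom_nz :: "('o, 'm, 'k) klcat \<Rightarrow> 'o \<Rightarrow> 'o \<Rightarrow> bool" where
  "hom_nz E x y \<longleftrightarrow> x \<in> Ob E \<and> y \<in> Ob E \<and> (\<exists>f\<in>Hom E x y. f \<noteq> mzero E x y)"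

definition preceq :: "('o, 'm, 'k) klcat \<Rightarrow> 'o \<Rightarrow> 'o \<Rightarrow> bool" where
  "preceq E x y \<longleftrightarrow> (hom_nz E)\<^sup>+\<^sup>+ x y"

definition prec :: "('o, 'm, 'k) klcat \<Rightarrow> 'o \<Rightarrow> 'o \<Rightarrow> bool" where
  "prec E x y \<longleftrightarrow> preceq E x y \<and> \<not> preceq E y x"

definition locally_finite :: "('o, 'm, 'k) klcat \<Rightarrow> bool" where
  "locally_finite E \<longleftrightarrow>
     (\<forall>x\<in>Ob E. \<forall>y\<in>Ob E. hom_fin_dim E x y) \<and>
     (\<forall>x\<in>Ob E. \<forall>y\<in>Ob E. finite {z\<in>Ob E. preceq E x z \<and> preceq E z y})"

definition factors_through :: "('o, 'm, 'k) klcat \<Rightarrow> 'o set \<Rightarrow> 'o \<Rightarrow> 'o \<Rightarrow> 'm \<Rightarrow> bool" where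
  "factors_through E X z y f \<longleftrightarrow>
     (\<exists>ts :: ('o \<times> 'm \<times> 'm) list.
        (\<forall>(x, g, h) \<in> set ts. x \<in> X \<and> g \<in> Hom E z x \<and> h \<in> Hom E x y) \<and>
        f = msum E z y (map (\<lambda>(x, g, h). cmp E z x y h g) ts))"

definition frontier_with :: "('o, 'm, 'k) klcat \<Rightarrow> 'o set \<Rightarrow> 'o set \<Rightarrow> 'o \<Rightarrow> bool" where
  "frontier_with E X W y \<longleftrightarrow>
     finite X \<and> X \<subseteq> Ob E \<and> (\<forall>x\<in>X. prec E x y) \<and> finite W \<and>
     (\<forall>z\<in>Ob E. prec E z y \<and> z \<notin> W \<longrightarrow> (\<forall>f\<in>Hom E z y. factors_through E X z y f))"

definition is_frontier :: "('o, 'm, 'k) klcat \<Rightarrow> 'o set \<Rightarrow> 'o \<Rightarrow> bool" where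
  "is_frontier E X y \<longleftrightarrow> (\<exists>W. frontier_with E X W y)"

definition left_strictly_locally_finite :: "('o, 'm, 'k) klcat \<Rightarrow> bool" where
  "left_strictly_locally_finite E \<longleftrightarrow> locally_finite E \<and>
     (\<forall>y\<in>Ob E. \<exists>X. frontier_with E X {} y)"

text \<open>Indexing: std_frontier_deg Xs y 0 = {y} (auxiliary),
  so that std_frontier_deg Xs y 1 = Xs y and
  std_frontier_deg Xs y (n+1) = \<Union>_{z \<in> deg n} Xs z, matching X_y^{(n)} for n \<ge> 1.\<close>
primrec std_frontier_deg :: "('o \<Rightarrow> 'o set) \<Rightarrow> 'o \<Rightarrow> nat \<Rightarrow> 'o set" where
  "std_frontier_deg Xs y 0 = {y}"
| "std_frontier_deg Xs y (Suc n) = (\<Union>z\<in>std_frontier_deg Xs y n. Xs z)"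

end

theory Submission
  imports Defs
begin

text \<open>Let X be a frontier for y with exceptional set W, and let f : z \<rightarrow> y factor as a sum
  of composites h_i g_i through objects x_i \<in> X. Unless z is \<preceq>-equivalent to one of the finitely
  many x \<in> X, each nonzero g_i : z \<rightarrow> x_i has z \<prec> x_i, so it factors through the standard
  frontier X_(x_i), and by bilinearity f factors through the union of the X_x for x \<in> X.
  Local finiteness keeps the enlarged exceptional set finite, so by induction on n every
  X_y^(n) is a frontier for y.\<close>

lemma preceq_trans: "preceq E a b \<Longrightarrow> preceq E b c \<Longrightarrow> preceq E a c"
  unfolding preceq_def by (rule tranclp_trans)

lemma prec_trans: "prec E a b \<Longrightarrow> prec E b c \<Longrightarrow> prec E a c"
  unfolding prec_def using preceq_trans by metis

lemma preceq_if_nonzero_hom: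
  "x \<in> Ob E \<Longrightarrow> y \<in> Ob E \<Longrightarrow> f \<in> Hom E x y \<Longrightarrow> f \<noteq> mzero E x y \<Longrightarrow> preceq E x y"
  unfolding preceq_def hom_nz_def by blast

definition preceq_class :: "('o, 'm, 'k) klcat \<Rightarrow> 'o \<Rightarrow> 'o set" where
  "preceq_class E x = {w \<in> Ob E. preceq E x w \<and> preceq E w x}"

lemma finite_preceq_class: "locally_finite E \<Longrightarrow> x \<in> Ob E \<Longrightarrow> finite (preceq_class E x)"
  unfolding locally_finite_def preceq_class_def by blast

lemma factors_through_zero: "factors_through E Y z y (mzero E z y)"
  unfolding factors_through_def by (rule exI[of _ "[]"]) (simp add: msum_def)

locale klinear_category =
  fixes E :: "('o, 'm, 'k::field) klcat"
  assumes klinear: "klinear_cat E"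
begin

lemmas hom_axioms = klinear[unfolded klinear_cat_def, THEN conjunct1, rule_format]

lemmas cmp_axioms =
  klinear[unfolded klinear_cat_def, THEN conjunct2, THEN conjunct2, THEN conjunct1, rule_format]

lemmas cmp_assoc =
  klinear[unfolded klinear_cat_def, THEN conjunct2, THEN conjunct2, THEN conjunct2, THEN conjunct1, rule_format]

lemma zero_closed: "x \<in> Ob E \<Longrightarrow> y \<in> Ob E \<Longrightarrow> mzero E x y \<in> Hom E x y"
  using hom_axioms by metis

lemma add_closed:
  "x \<in> Ob E \<Longrightarrow> y \<in> Ob E \<Longrightarrow> f \<in> Hom E x y \<Longrightarrow> g \<in> Hom E x y \<Longrightarrow> madd E x y f g \<in> Hom E x y"
  using hom_axioms by metis

lemma add_assoc:
  "x \<in> Ob E \<Longrightarrow> y \<in> Ob E \<Longrightarrow> f \<in> Hom E x y \<Longrightarrow> g \<in> Hom E x y \<Longrightarrow> h \<in> Hom E x y \<Longrightarrow>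
    madd E x y (madd E x y f g) h = madd E x y f (madd E x y g h)"
  using hom_axioms by metis

lemma add_commute:
  "x \<in> Ob E \<Longrightarrow> y \<in> Ob E \<Longrightarrow> f \<in> Hom E x y \<Longrightarrow> g \<in> Hom E x y \<Longrightarrow> madd E x y f g = madd E x y g f"
  using hom_axioms by metis

lemma add_zero_left: "x \<in> Ob E \<Longrightarrow> y \<in> Ob E \<Longrightarrow> f \<in> Hom E x y \<Longrightarrow> madd E x y (mzero E x y) f = f"
  using hom_axioms by metis

lemma add_inverse_exists:
  "x \<in> Ob E \<Longrightarrow> y \<in> Ob E \<Longrightarrow> f \<in> Hom E x y \<Longrightarrow> \<exists>g\<in>Hom E x y. madd E x y f g = mzero E x y"
  using hom_axioms by metis

lemma cmp_closed:
  "x \<in> Ob E \<Longrightarrow> y \<in> Ob E \<Longrightarrow> z \<in> Ob E \<Longrightarrow> g \<in> Hom E x y \<Longrightarrow> h \<in> Hom E y z \<Longrightarrow>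
    cmp E x y z h g \<in> Hom E x z"
  using cmp_axioms by metis

lemma cmp_add_right:
  "x \<in> Ob E \<Longrightarrow> y \<in> Ob E \<Longrightarrow> z \<in> Ob E \<Longrightarrow> g \<in> Hom E x y \<Longrightarrow> g' \<in> Hom E x y \<Longrightarrow>
    h \<in> Hom E y z \<Longrightarrow> cmp E x y z h (madd E x y g g') = madd E x z (cmp E x y z h g) (cmp E x y z h g')"
  using cmp_axioms by metis

lemma zero_if_add_self_eq_self:
  assumes ob: "x \<in> Ob E" "y \<in> Ob E" and a: "a \<in> Hom E x y" and aa: "madd E x y a a = a"
  shows "a = mzero E x y"
proof -
  obtain b where b: "b \<in> Hom E x y" "madd E x y a b = mzero E x y"
    using add_inverse_exists[OF ob a] by blast
  have "mzero E x y = madd E x y (madd E x y a a) b" using aa b by simp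
  also have "\<dots> = madd E x y a (mzero E x y)" using add_assoc[OF ob a a b(1)] b by simp
  also have "\<dots> = a" using add_commute add_zero_left zero_closed ob a by metis
  finally show ?thesis by simp
qed

lemma cmp_zero_right:
  assumes ob: "x \<in> Ob E" "y \<in> Ob E" "z \<in> Ob E" and h: "h \<in> Hom E y z"
  shows "cmp E x y z h (mzero E x y) = mzero E x z"
proof (rule zero_if_add_self_eq_self)
  have zero: "mzero E x y \<in> Hom E x y" using zero_closed ob by blast
  then show "cmp E x y z h (mzero E x y) \<in> Hom E x z" using cmp_closed ob h by blast
  show "madd E x z (cmp E x y z h (mzero E x y)) (cmp E x y z h (mzero E x y)) = cmp E x y z h (mzero E x y)"
    using cmp_add_right[OF ob zero zero h] add_zero_left[OF ob(1,2) zero] by simp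
qed (use ob in auto)

lemma msum_closed:
  "x \<in> Ob E \<Longrightarrow> y \<in> Ob E \<Longrightarrow> set fs \<subseteq> Hom E x y \<Longrightarrow> msum E x y fs \<in> Hom E x y"
  by (induction fs) (auto simp: msum_def zero_closed add_closed)

lemma msum_append:
  assumes ob: "x \<in> Ob E" "y \<in> Ob E" and fs: "set fs \<subseteq> Hom E x y" and gs: "set gs \<subseteq> Hom E x y"
  shows "msum E x y (fs @ gs) = madd E x y (msum E x y fs) (msum E x y gs)"
  using fs
proof (induction fs)
  case Nil
  then show ?case using add_zero_left[OF ob msum_closed[OF ob gs]] by (simp add: msum_def)
next
  case (Cons f fs)
  then show ?case
    using add_assoc[OF ob _ msum_closed[OF ob] msum_closed[OF ob gs], of f fs]
    by (simp add: msum_def)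
qed

lemma cmp_msum_right:
  assumes ob: "x \<in> Ob E" "y \<in> Ob E" "z \<in> Ob E" and h: "h \<in> Hom E y z"
  shows "set gs \<subseteq> Hom E x y \<Longrightarrow> cmp E x y z h (msum E x y gs) = msum E x z (map (cmp E x y z h) gs)"
proof (induction gs)
  case Nil
  then show ?case using cmp_zero_right[OF ob h] by (simp add: msum_def)
next
  case (Cons g gs)
  then show ?case
    using cmp_add_right[OF ob _ msum_closed[OF ob(1,2)] h, of g gs] by (simp add: msum_def)
qed

lemma factorization_terms_closed:
  assumes ob: "z \<in> Ob E" "y \<in> Ob E" and Y: "Y \<subseteq> Ob E"
    and ts: "\<forall>(x, g, h) \<in> set ts. x \<in> Y \<and> g \<in> Hom E z x \<and> h \<in> Hom E x y"
  shows "set (map (\<lambda>(x, g, h). cmp E z x y h g) ts) \<subseteq> Hom E z y"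
proof clarsimp
  fix x g h assume "(x, g, h) \<in> set ts"
  then have "x \<in> Ob E" "g \<in> Hom E z x" "h \<in> Hom E x y" using ts Y by fastforce+
  then show "cmp E z x y h g \<in> Hom E z y" using cmp_closed[OF ob(1) _ ob(2)] by blast
qed

lemma factors_through_add:
  assumes ob: "z \<in> Ob E" "y \<in> Ob E" and Y: "Y \<subseteq> Ob E"
    and "factors_through E Y z y f" "factors_through E Y z y f'"
  shows "factors_through E Y z y (madd E z y f f')"
proof -
  obtain ts where
    ts: "\<forall>(x, g, h) \<in> set ts. x \<in> Y \<and> g \<in> Hom E z x \<and> h \<in> Hom E x y"
        "f = msum E z y (map (\<lambda>(x, g, h). cmp E z x y h g) ts)"
    using assms(4) unfolding factors_through_def by blast
  obtain ts' where
    ts': "\<forall>(x, g, h) \<in> set ts'. x \<in> Y \<and> g \<in> Hom E z x \<and> h \<in> Hom E x y"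
        "f' = msum E z y (map (\<lambda>(x, g, h). cmp E z x y h g) ts')"
    using assms(5) unfolding factors_through_def by blast
  show ?thesis unfolding factors_through_def
  proof (intro exI conjI)
    show "\<forall>(x, g, h) \<in> set (ts @ ts'). x \<in> Y \<and> g \<in> Hom E z x \<and> h \<in> Hom E x y"
      using ts(1) ts'(1) by auto
    show "madd E z y f f' = msum E z y (map (\<lambda>(x, g, h). cmp E z x y h g) (ts @ ts'))"
      using ts(2) ts'(2) msum_append[OF ob factorization_terms_closed[OF ob Y ts(1)]
          factorization_terms_closed[OF ob Y ts'(1)]] by simp
  qed
qed

lemma factors_through_msum:
  assumes ob: "z \<in> Ob E" "y \<in> Ob E" and Y: "Y \<subseteq> Ob E"
  shows "\<forall>f \<in> set fs. factors_through E Y z y f \<Longrightarrow> factors_through E Y z y (msum E z y fs)"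
  by (induction fs) (auto simp: msum_def factors_through_zero factors_through_add[OF ob Y])

lemma factors_through_cmp:
  assumes ob: "z \<in> Ob E" "x \<in> Ob E" "y \<in> Ob E" and Y: "Y \<subseteq> Ob E" "Y \<subseteq> Y'"
    and h: "h \<in> Hom E x y" and g: "factors_through E Y z x g"
  shows "factors_through E Y' z y (cmp E z x y h g)"
proof -
  obtain ts where
    ts: "\<forall>(w, g, h) \<in> set ts. w \<in> Y \<and> g \<in> Hom E z w \<and> h \<in> Hom E w x"
        "g = msum E z x (map (\<lambda>(w, g, h). cmp E z w x h g) ts)"
    using g unfolding factors_through_def by blast
  define ts' where "ts' = map (\<lambda>(w, g, h'). (w, g, cmp E w x y h h')) ts"
  have "cmp E z x y h g = msum E z y (map (cmp E z x y h \<circ> (\<lambda>(w, g, h). cmp E z w x h g)) ts)"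
    using ts(2) cmp_msum_right[OF ob h factorization_terms_closed[OF ob(1,2) Y(1) ts(1)]] by simp
  also have "\<dots> = msum E z y (map (\<lambda>(w, g, h'). cmp E z w y h' g) ts')"
    unfolding ts'_def map_map
  proof (intro arg_cong[where f = "msum E z y"] map_cong refl)
    fix t assume t: "t \<in> set ts"
    obtain w g' h' where t_eq: "t = (w, g', h')" by (cases t)
    have "w \<in> Ob E" "g' \<in> Hom E z w" "h' \<in> Hom E w x" using t t_eq ts(1) Y(1) by fastforce+
    then show "(cmp E z x y h \<circ> (\<lambda>(w, g, h). cmp E z w x h g)) t
        = ((\<lambda>(w, g, h'). cmp E z w y h' g) \<circ> (\<lambda>(w, g, h'). (w, g, cmp E w x y h h'))) t"
      using t_eq cmp_assoc[OF ob(1) _ ob(2,3) _ _ h] by simp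
  qed
  finally have "cmp E z x y h g = msum E z y (map (\<lambda>(w, g, h'). cmp E z w y h' g) ts')" .
  moreover have "\<forall>(w, g, h') \<in> set ts'. w \<in> Y' \<and> g \<in> Hom E z w \<and> h' \<in> Hom E w y"
    unfolding ts'_def
  proof clarsimp
    fix w g' h' assume "(w, g', h') \<in> set ts"
    then have "w \<in> Y" "g' \<in> Hom E z w" "h' \<in> Hom E w x" using ts(1) by fastforce+
    then show "w \<in> Y' \<and> g' \<in> Hom E z w \<and> cmp E w x y h h' \<in> Hom E w y"
      using Y cmp_closed[OF _ ob(2,3) _ h] by blast
  qed
  ultimately show ?thesis unfolding factors_through_def by (intro exI[of _ ts']) simp
qed

end

locale standard_frontiers = klinear_category E for E :: "('o, 'm, 'k::field) klcat" +
  fixes Xs :: "'o \<Rightarrow> 'o set"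
  assumes locally_finite: "locally_finite E"
    and standard: "\<And>y. y \<in> Ob E \<Longrightarrow> frontier_with E (Xs y) {} y"
begin

lemma standard_frontier_finite: "y \<in> Ob E \<Longrightarrow> finite (Xs y)"
  using standard unfolding frontier_with_def by blast

lemma standard_frontier_Ob: "y \<in> Ob E \<Longrightarrow> Xs y \<subseteq> Ob E"
  using standard unfolding frontier_with_def by blast

lemma standard_frontier_prec: "y \<in> Ob E \<Longrightarrow> x \<in> Xs y \<Longrightarrow> prec E x y"
  using standard unfolding frontier_with_def by blast

lemma cmp_factors_through_standard_frontier:
  assumes ob: "z \<in> Ob E" "x \<in> Ob E" "y \<in> Ob E" and "Xs x \<subseteq> Y"
    and g: "g \<in> Hom E z x" and h: "h \<in> Hom E x y" and z: "z \<notin> preceq_class E x"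
  shows "factors_through E Y z y (cmp E z x y h g)"
proof (cases "g = mzero E z x")
  case True
  then show ?thesis using cmp_zero_right[OF ob h] factors_through_zero by simp
next
  case False
  then have "prec E z x"
    using preceq_if_nonzero_hom[OF ob(1,2) g] z ob(1) unfolding prec_def preceq_class_def by blast
  then have "factors_through E (Xs x) z x g"
    using standard[OF ob(2)] ob(1) g unfolding frontier_with_def by blast
  then show ?thesis
    using factors_through_cmp[OF ob standard_frontier_Ob[OF ob(2)] \<open>Xs x \<subseteq> Y\<close> h] by blast
qed

lemma frontier_with_refine:
  assumes fr: "frontier_with E X W y" and y: "y \<in> Ob E"
  shows "frontier_with E (\<Union>x\<in>X. Xs x) (W \<union> (\<Union>x\<in>X. preceq_class E x)) y"
proof -
  let ?Y = "\<Union>x\<in>X. Xs x"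
  let ?W = "W \<union> (\<Union>x\<in>X. preceq_class E x)"
  have X: "finite X" "X \<subseteq> Ob E" "\<forall>x\<in>X. prec E x y" "finite W"
    and fac: "\<And>z f. z \<in> Ob E \<Longrightarrow> prec E z y \<Longrightarrow> z \<notin> W \<Longrightarrow> f \<in> Hom E z y \<Longrightarrow>
      factors_through E X z y f"
    using fr unfolding frontier_with_def by auto
  have Y: "?Y \<subseteq> Ob E" using X(2) standard_frontier_Ob by blast
  have finite_Y: "finite ?Y" using X(1,2) standard_frontier_finite by blast
  have prec_Y: "\<forall>w\<in>?Y. prec E w y"
  proof
    fix w assume "w \<in> ?Y"
    then obtain x where x: "x \<in> X" "w \<in> Xs x" by blast
    then have "x \<in> Ob E" using X(2) by blast
    then show "prec E w y" using prec_trans[OF standard_frontier_prec] x X(3) by blast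
  qed
  have finite_W: "finite ?W" using X(1,2,4) finite_preceq_class[OF locally_finite] by auto
  have factors: "factors_through E ?Y z y f"
    if z: "z \<in> Ob E" "prec E z y" "z \<notin> ?W" and f: "f \<in> Hom E z y" for z f
  proof -
    obtain ts where ts: "\<forall>(x, g, h) \<in> set ts. x \<in> X \<and> g \<in> Hom E z x \<and> h \<in> Hom E x y"
        "f = msum E z y (map (\<lambda>(x, g, h). cmp E z x y h g) ts)"
      using fac[OF z(1,2) _ f] z(3) unfolding factors_through_def by blast
    have "\<forall>t \<in> set (map (\<lambda>(x, g, h). cmp E z x y h g) ts). factors_through E ?Y z y t"
    proof clarsimp
      fix x g h assume "(x, g, h) \<in> set ts"
      then have "x \<in> X" "g \<in> Hom E z x" "h \<in> Hom E x y" using ts(1) by fastforce+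
      moreover have "z \<notin> preceq_class E x" using z(3) \<open>x \<in> X\<close> by blast
      ultimately show "factors_through E ?Y z y (cmp E z x y h g)"
        using cmp_factors_through_standard_frontier[OF z(1) _ y] X(2) by blast
    qed
    then show ?thesis using ts(2) factors_through_msum[OF z(1) y Y] by simp
  qed
  show ?thesis unfolding frontier_with_def
  proof (intro conjI ballI impI)
    fix z f assume "z \<in> Ob E" "prec E z y \<and> z \<notin> ?W" "f \<in> Hom E z y"
    then show "factors_through E ?Y z y f" using factors by blast
  qed (use finite_Y Y prec_Y finite_W in \<open>simp_all only:\<close>)
qed

lemma frontier_with_std_frontier_deg:
  assumes y: "y \<in> Ob E"
  shows "\<exists>W. frontier_with E (std_frontier_deg Xs y (Suc n)) W y"
proof (induction n)
  case 0
  then show ?case using standard[OF y] by auto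
next
  case (Suc n)
  then obtain W where "frontier_with E (std_frontier_deg Xs y (Suc n)) W y" by blast
  from frontier_with_refine[OF this y] show ?case by auto
qed

end

theorem lemma4p6:
  fixes E :: "('o, 'm, 'k::field) klcat"
    and Xs :: "'o \<Rightarrow> 'o set"
  assumes "klinear_cat E"
    and "left_strictly_locally_finite E"
    and "\<forall>y\<in>Ob E. frontier_with E (Xs y) {} y"
  shows "\<forall>y\<in>Ob E. \<forall>n::nat. n \<ge> 1 \<longrightarrow> is_frontier E (std_frontier_deg Xs y n) y"
proof -
  interpret standard_frontiers E Xs
    using assms unfolding left_strictly_locally_finite_def
    by unfold_locales auto
  show ?thesis
  proof (intro ballI allI impI)
    fix y and n :: nat
    assume "y \<in> Ob E" "n \<ge> 1"
    then show "is_frontier E (std_frontier_deg Xs y n) y"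
      using frontier_with_std_frontier_deg unfolding is_frontier_def by (metis Suc_pred' not_one_le_zero gr0I)
  qed
qed

end
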